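(* Let $m\ge 2$ and let $B$ be a blocker in $CK(2m)$ such that $e=[2m-3,2m-2]\in B$ and $f=[2m-2,2m-1]\notin B$. Let $G'$ be the complete convex geometric graph on the $2m-2$ vertices $0,1,\dots,2m-3$ (the subgraph of $CK(2m)$ induced by deleting the endpoints $2m-2,2m-1$ of $f$). Then $B\setminus\{e\}$ is a set of edges of $G'$ and is a blocker in $G'$ (a blocking set of $G'$ of size $m-1$).
   Context: $CK(2m)$ denotes the complete convex geometric graph whose vertices are the $2m$ vertices of a convex polygon, labelled cyclically $0,1,\dots,2m-1$, and whose edges are all straight segments between pairs of vertices. Two edges with four distinct endpoints cross iff their endpoints alternate in the cyclic order. More generally, for a set of $2n$ points in convex position, consider the complete convex geometric graph on them; an SPM is a set of $n$ pairwise disjoint edges (no common endpoint and no crossing), a blocking set is a set of edges containing at least one edge of every SPM, and a blocker is a blocking set of exactly $n$ edges. *)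

theory Defs
  imports Main
begin

text \<open>Points in convex position are identified with natural-number labels; their
cyclic order is the order of the labels. Edges are two-element sets of labels.\<close>

definition cedges :: "nat set \<Rightarrow> nat set set" where
  "cedges V = {e. e \<subseteq> V \<and> card e = 2}"

text \<open>Two edges with four distinct endpoints cross iff their endpoints alternate
(in the cyclic order; for labels this is the same as alternation in the linear order).\<close>
definition crosses :: "nat set \<Rightarrow> nat set \<Rightarrow> bool" where
  "crosses e f \<longleftrightarrow>
     (\<exists>a b c d. a < c \<and> c < b \<and> b < d \<and>
        ((e = {a, b} \<and> f = {c, d}) \<or> (e = {c, d} \<and> f = {a, b})))"

definition disjoint_edges :: "nat set \<Rightarrow> nat set \<Rightarrow> bool" where
  "disjoint_edges e f \<longleftrightarrow> e \<inter> f = {} \<and> \<not> crosses e f"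

definition SPM :: "nat set \<Rightarrow> nat set set \<Rightarrow> bool" where
  "SPM V M \<longleftrightarrow> M \<subseteq> cedges V \<and> finite M \<and> card M = card V div 2 \<and>
     pairwise disjoint_edges M"

definition blocking_set :: "nat set \<Rightarrow> nat set set \<Rightarrow> bool" where
  "blocking_set V B \<longleftrightarrow> B \<subseteq> cedges V \<and> (\<forall>M. SPM V M \<longrightarrow> B \<inter> M \<noteq> {})"

definition blocker :: "nat set \<Rightarrow> nat set set \<Rightarrow> bool" where
  "blocker V B \<longleftrightarrow> blocking_set V B \<and> finite B \<and> card B = card V div 2"

end

theory Submission
  imports Defs
begin

(* Write V' = {0..<2m-2}, e = {2m-3,2m-2} and f = {2m-2,2m-1}.
   (1) Lower bound: in CK(2k) the k "parallel classes" (edges {a,b} with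
       a + b = c mod 2k, c odd) are pairwise edge-disjoint SPMs, so every
       blocking set of CK(2k) has at least k edges.
   (2) Extension: the two largest vertices 2m-2, 2m-1 span a hull edge f that
       meets and crosses no edge on V', so f together with an SPM of V' is an
       SPM of {0..<2m}.  Since f is not in B, B must hit the SPM of V'; thus
       B \<inter> cedges V' blocks V'.
   (3) Counting: B \<inter> cedges V' \<subseteq> B - {e}; the left side has at least m-1
       edges by (1), the right side exactly m-1, so they coincide, which gives
       both claims of the theorem. *)

lemma finite_cedges: "finite V \<Longrightarrow> finite (cedges V)"
  unfolding cedges_def by (rule finite_subset[of _ "Pow V"]) auto

lemma ordered_doubleton_eq:
  "{p, r} = {a, b} \<Longrightarrow> (p::nat) < r \<Longrightarrow> a < b \<Longrightarrow> p = a \<and> r = b"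
  by (auto simp: doubleton_eq_iff)

definition parallel_class :: "nat \<Rightarrow> nat \<Rightarrow> nat set set" where
  "parallel_class k c = {{a, b} | a b. a < b \<and> b < 2*k \<and> (a + b = c \<or> a + b = c + 2*k)}"

lemma parallel_class_memE:
  assumes "{a, b} \<in> parallel_class k c" "a < b"
  shows "b < 2*k \<and> (a + b = c \<or> a + b = c + 2*k)"
proof -
  from assms(1) obtain u v where "{a, b} = {u, v}" "u < v" "v < 2*k" "u + v = c \<or> u + v = c + 2*k"
    unfolding parallel_class_def by blast
  with ordered_doubleton_eq[of a b u v] assms(2) show ?thesis by auto
qed

lemma parallel_class_cedges: "parallel_class k c \<subseteq> cedges {0..<2*k}"
  unfolding parallel_class_def cedges_def by auto

(* Distinct edges of one class share no endpoint: the partner of a vertex is determined. *)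
lemma parallel_class_disjoint:
  assumes "x \<in> parallel_class k c" "y \<in> parallel_class k c" "x \<noteq> y" "c < 2*k"
  shows "x \<inter> y = {}"
proof -
  obtain a b a' b' where xy: "x = {a, b}" "a < b" "y = {a', b'}" "a' < b'"
    using assms(1,2) unfolding parallel_class_def by blast
  have "b < 2*k" "a + b = c \<or> a + b = c + 2*k" "b' < 2*k" "a' + b' = c \<or> a' + b' = c + 2*k"
    using parallel_class_memE assms(1,2) xy by blast+
  then have "a \<noteq> a' \<and> a \<noteq> b' \<and> b \<noteq> a' \<and> b \<noteq> b'"
    using assms(3,4) xy by auto
  then show ?thesis using xy by auto
qed

(* Edges of one class are "parallel": alternating endpoints would give two
   different sums p + r < q + s in the same residue class. *)
lemma parallel_class_no_cross:
  assumes "x \<in> parallel_class k c" "y \<in> parallel_class k c" "c < 2*k"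
  shows "\<not> crosses x y"
proof
  assume "crosses x y"
  then obtain p q r s where ord: "p < q" "q < r" "r < s"
    and xy: "(x = {p, r} \<and> y = {q, s}) \<or> (x = {q, s} \<and> y = {p, r})"
    unfolding crosses_def by blast
  have "{p, r} \<in> parallel_class k c" "{q, s} \<in> parallel_class k c"
    using xy assms by auto
  then have "s < 2*k" "p + r = c \<or> p + r = c + 2*k" "q + s = c \<or> q + s = c + 2*k"
    using parallel_class_memE ord by (meson less_trans)+
  with ord assms(3) show False by linarith
qed

(* For odd c every vertex v has its partner c - v (mod 2k), distinct from v. *)
lemma parallel_class_covers:
  assumes "odd c" "c < 2*k"
  shows "\<Union>(parallel_class k c) = {0..<2*k}"
proof
  show "\<Union>(parallel_class k c) \<subseteq> {0..<2*k}"
    using parallel_class_cedges[of k c] unfolding cedges_def by blast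
  show "{0..<2*k} \<subseteq> \<Union>(parallel_class k c)"
  proof
    fix v assume v: "v \<in> {0..<2*k}"
    define w where "w = (if v \<le> c then c - v else c + 2*k - v)"
    have w: "w < 2*k" "v + w = c \<or> v + w = c + 2*k" "w \<noteq> v"
      using v assms unfolding w_def by (auto, presburger+)
    have "{min v w, max v w} \<in> parallel_class k c"
      unfolding parallel_class_def using w v
      by (intro CollectI exI[of _ "min v w"] exI[of _ "max v w"]) (auto simp: min_def max_def)
    moreover have "v \<in> {min v w, max v w}" by (auto simp: min_def max_def)
    ultimately show "v \<in> \<Union>(parallel_class k c)" by blast
  qed
qed

lemma parallel_class_SPM:
  assumes "odd c" "c < 2*k"
  shows "SPM {0..<2*k} (parallel_class k c)"
proof -
  let ?P = "parallel_class k c"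
  have fin: "finite ?P"
    using parallel_class_cedges finite_cedges[of "{0..<2*k}"] finite_subset by blast
  have pw: "pairwise disjoint_edges ?P"
    unfolding pairwise_def disjoint_edges_def
    using parallel_class_disjoint parallel_class_no_cross assms(2) by simp
  have edges: "\<And>x. x \<in> ?P \<Longrightarrow> finite x \<and> card x = 2"
    using parallel_class_cedges[of k c] unfolding cedges_def by (auto intro: finite_subset[of _ "{0..<2*k}"])
  have "card (\<Union>?P) = sum card ?P"
    using pw edges unfolding pairwise_def disjoint_edges_def disjnt_def
    by (intro card_Union_disjoint) (auto simp: pairwise_def disjnt_def)
  also have "\<dots> = 2 * card ?P"
    using edges by simp
  finally have "card ?P = card {0..<2*k} div 2"
    using parallel_class_covers[OF assms] by simp
  then show ?thesis unfolding SPM_def using parallel_class_cedges fin pw by blast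
qed

lemma parallel_class_unique:
  assumes "x \<in> parallel_class k c" "x \<in> parallel_class k c'" "c < 2*k" "c' < 2*k"
  shows "c = c'"
proof -
  obtain a b where x: "x = {a, b}" "a < b"
    using assms(1) unfolding parallel_class_def by blast
  then show ?thesis
    using parallel_class_memE[of a b k c] parallel_class_memE[of a b k c'] assms by auto
qed

(* Every blocking set of CK(2k) meets each of the k odd classes in a different edge. *)
lemma blocking_set_card_lower:
  assumes "blocking_set {0..<2*k} B"
  shows "k \<le> card B"
proof -
  have finB: "finite B"
    using assms finite_cedges[of "{0..<2*k}"] finite_subset unfolding blocking_set_def by blast
  have "B \<inter> parallel_class k (2*i+1) \<noteq> {}" if "i < k" for i
    using assms parallel_class_SPM[of "2*i+1" k] that unfolding blocking_set_def by simp
  then have "\<forall>i. \<exists>x. i < k \<longrightarrow> x \<in> B \<inter> parallel_class k (2*i+1)" by blast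
  then obtain g where g: "\<And>i. i < k \<Longrightarrow> g i \<in> B \<inter> parallel_class k (2*i+1)"
    by (metis choice)
  have "inj_on g {..<k}"
  proof (rule inj_onI)
    fix i j assume "i \<in> {..<k}" "j \<in> {..<k}" "g i = g j"
    then have "2*i+1 = 2*j+1"
      using g[of i] g[of j] parallel_class_unique[of "g i" k "2*i+1" "2*j+1"] by auto
    then show "i = j" by simp
  qed
  moreover have "g ` {..<k} \<subseteq> B" using g by blast
  ultimately have "card {..<k} \<le> card B" using card_inj_on_le finB by blast
  then show ?thesis by simp
qed

lemma crosses_separated:
  assumes "\<forall>u\<in>x. \<forall>v\<in>y. u < (v::nat)"
  shows "\<not> crosses x y \<and> \<not> crosses y x"
  using assms unfolding crosses_def by (metis insertCI less_asym)

(* An SPM on V plus the edge {a,b} on two new vertices above V is an SPM of the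
   enlarged point set: {a,b} is a hull edge not crossing anything inside V. *)
lemma SPM_extend_above:
  assumes "SPM V M" "finite V" "a < b" "\<forall>v\<in>V. v < a"
  shows "SPM (insert a (insert b V)) (insert {a, b} M)"
proof -
  have M: "M \<subseteq> cedges V" "finite M" "card M = card V div 2" "pairwise disjoint_edges M"
    using assms(1) unfolding SPM_def by auto
  have below: "\<forall>u\<in>x. \<forall>v\<in>{a, b}. u < v" if "x \<in> M" for x
    using that M(1) assms(3,4) unfolding cedges_def by fastforce
  have new: "{a, b} \<notin> M" using below by blast
  have "disjoint_edges {a, b} x \<and> disjoint_edges x {a, b}" if "x \<in> M" for x
    using below[OF that] crosses_separated[OF below[OF that]]
    unfolding disjoint_edges_def by blast
  then have "pairwise disjoint_edges (insert {a, b} M)"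
    using M(4) unfolding pairwise_insert by blast
  moreover have "card (insert a (insert b V)) = card V + 2"
  proof -
    have "a \<notin> insert b V" "b \<notin> V" using assms(3,4) by auto
    then show ?thesis using assms(2) by simp
  qed
  moreover have "insert {a, b} M \<subseteq> cedges (insert a (insert b V))"
    using M(1) assms(3) unfolding cedges_def by auto
  ultimately show ?thesis
    unfolding SPM_def using M(2,3) new by auto
qed

lemma blocking_set_restrict:
  assumes "blocking_set (insert a (insert b V)) B" "{a, b} \<notin> B"
    and "finite V" "a < b" "\<forall>v\<in>V. v < a"
  shows "blocking_set V (B \<inter> cedges V)"
  unfolding blocking_set_def
proof (intro conjI allI impI)
  fix M assume M: "SPM V M"
  then have "SPM (insert a (insert b V)) (insert {a, b} M)"
    using SPM_extend_above assms(3-5) by blast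
  then have "B \<inter> insert {a, b} M \<noteq> {}"
    using assms(1) unfolding blocking_set_def by blast
  moreover have "M \<subseteq> cedges V" using M unfolding SPM_def by blast
  ultimately show "B \<inter> cedges V \<inter> M \<noteq> {}" using assms(2) by blast
qed simp

theorem claim3p4:
  fixes m :: nat and B :: "nat set set"
  assumes "m \<ge> 2"
    and "blocker {0..<2*m} B"
    and "{2*m-3, 2*m-2} \<in> B"
    and "{2*m-2, 2*m-1} \<notin> B"
  shows "B - {{2*m-3, 2*m-2}} \<subseteq> cedges {0..<2*m-2}
         \<and> blocker {0..<2*m-2} (B - {{2*m-3, 2*m-2}})"
proof -
  define V' where "V' = {0..<2*m-2}"
  define e where "e = {2*m-3, 2*m-2}"
  have B: "blocking_set {0..<2*m} B" "finite B" "card B = m"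
    using assms(2) unfolding blocker_def by auto
  have "{0..<2*m} = insert (2*m-2) (insert (2*m-1) V')"
    using assms(1) unfolding V'_def by auto
  then have "blocking_set (insert (2*m-2) (insert (2*m-1) V')) B"
    using B(1) by simp
  then have restricted: "blocking_set V' (B \<inter> cedges V')"
    by (rule blocking_set_restrict) (use assms(1,4) in \<open>auto simp: V'_def\<close>)
  have "V' = {0..<2*(m-1)}" unfolding V'_def by (simp add: right_diff_distrib')
  then have "m - 1 \<le> card (B \<inter> cedges V')"
    using blocking_set_card_lower restricted by simp
  moreover have "B \<inter> cedges V' \<subseteq> B - {e}"
    unfolding e_def V'_def cedges_def by auto
  moreover have card_Be: "card (B - {e}) = m - 1"
    using B assms(3) unfolding e_def by simp
  ultimately have "B \<inter> cedges V' = B - {e}"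
    using card_seteq[of "B - {e}" "B \<inter> cedges V'"] B(2) by simp
  moreover have "card V' div 2 = m - 1" unfolding V'_def by simp
  ultimately show ?thesis
    using restricted card_Be B(2)
    unfolding blocker_def e_def[symmetric] V'_def[symmetric] by auto
qed

end
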